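(* Let $\mathcal{H}$ be a separable infinite-dimensional complex Hilbert space, let $T\in\mathscr{B}(\mathcal{H})$ have dense range and let $\varepsilon>0$. Then the map $x_0\mapsto y_{x_0,\varepsilon}$, from the open set $\{x_0\in\mathcal{H}:\|x_0\|>\varepsilon\}$ to $\mathcal{H}$, is continuous (for the norm topology).
   Context: For $T\in\mathscr{B}(\mathcal{H})$ with dense range, $x_0\neq 0$ and $0<\varepsilon<\|x_0\|$, the extremal vector $y_{x_0,\varepsilon}$ is the unique vector $y_0\in\mathcal{H}$ with $\|Ty_0-x_0\|\leqslant\varepsilon$ and $\|y_0\|=\inf\{\|y\|:\|Ty-x_0\|\leqslant\varepsilon\}$. *)

theory Defs
  imports "HOL-Analysis.Analysis"
begin

class complex_inner_space = real_normed_vector +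
  fixes cscale :: "complex \<Rightarrow> 'a \<Rightarrow> 'a" (infixr \<open>*\<^sub>C\<close> 75)
    and cinner :: "'a \<Rightarrow> 'a \<Rightarrow> complex"
  assumes cscale_add_right: "a *\<^sub>C (x + y) = a *\<^sub>C x + a *\<^sub>C y"
    and cscale_add_left: "(a + b) *\<^sub>C x = a *\<^sub>C x + b *\<^sub>C x"
    and cscale_cscale: "a *\<^sub>C (b *\<^sub>C x) = (a * b) *\<^sub>C x"
    and cscale_one: "1 *\<^sub>C x = x"
    and cscale_of_real: "(complex_of_real r) *\<^sub>C x = r *\<^sub>R x"
    and cinner_commute: "cinner x y = cnj (cinner y x)"
    and cinner_add_left: "cinner (x + y) z = cinner x z + cinner y z"
    and cinner_cscale_left: "cinner (a *\<^sub>C x) y = cnj a * cinner x y"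
    and norm_eq_sqrt_cinner: "norm x = sqrt (Re (cinner x x))"

class complex_hilbert_space = complex_inner_space + complete_space

definition cspan :: "'a::complex_inner_space set \<Rightarrow> 'a set" where
  "cspan S = {y. \<exists>F c. finite F \<and> F \<subseteq> S \<and> y = (\<Sum>x\<in>F. c x *\<^sub>C x)}"

definition infinite_dimensional :: "'a::complex_inner_space itself \<Rightarrow> bool" where
  "infinite_dimensional _ \<longleftrightarrow> \<not> (\<exists>S::'a set. finite S \<and> cspan S = UNIV)"

definition separable_space :: "'a::topological_space itself \<Rightarrow> bool" where
  "separable_space _ \<longleftrightarrow> (\<exists>D::'a set. countable D \<and> closure D = UNIV)"

definition bounded_clinear :: "('a::complex_inner_space \<Rightarrow> 'b::complex_inner_space) \<Rightarrow> bool" where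
  "bounded_clinear T \<longleftrightarrow> bounded_linear T \<and> (\<forall>c x. T (c *\<^sub>C x) = c *\<^sub>C T x)"

definition extremal_vector ::
  "('a::complex_inner_space \<Rightarrow> 'a) \<Rightarrow> 'a \<Rightarrow> real \<Rightarrow> 'a" where
  "extremal_vector T x0 \<epsilon> =
     (THE y0. norm (T y0 - x0) \<le> \<epsilon> \<and>
              norm y0 = Inf {norm y | y. norm (T y - x0) \<le> \<epsilon>})"

end

theory Submission
  imports Defs
begin

text \<open>
  The \<open>\<epsilon>\<close>-approximate solutions \<open>{y. \<parallel>T y - x\<parallel> \<le> \<epsilon>}\<close> form a nonempty closed
  convex set. By the parallelogram law the norm is uniformly convex on it: two approximate
  solutions of almost minimal norm are close. This gives existence and uniqueness of the
  extremal vector, and also its continuity. If \<open>\<parallel>x' - x\<parallel> = \<delta>\<close>, moving an approximate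
  solution for one point a distance \<open>O(\<delta>)\<close> towards a fixed \<open>w\<close> with
  \<open>\<parallel>T w - x\<parallel> \<le> \<epsilon>/2\<close> yields an approximate solution for the other point. Hence the
  minimal norms at \<open>x\<close> and \<open>x'\<close> differ by \<open>O(\<delta>)\<close>, and uniform convexity turns this
  into a distance \<open>O(\<surd>\<delta>)\<close> between the extremal vectors at \<open>x\<close> and \<open>x'\<close>.
\<close>

lemma cinner_add_right: "cinner x (y + z) = cinner x y + cinner x (z::'a::complex_inner_space)"
proof -
  have "cinner x (y + z) = cnj (cinner (y + z) x)"
    by (rule cinner_commute)
  then show ?thesis
    by (simp add: cinner_add_left cinner_commute[of x y] cinner_commute[of x z])
qed

lemma cinner_minus_left: "cinner (- x) y = - cinner x (y::'a::complex_inner_space)"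
  using cinner_cscale_left[of "complex_of_real (-1)" x y] cscale_of_real[of "-1" x] by simp

lemma cinner_diff_left: "cinner (x - y) z = cinner x z - cinner y (z::'a::complex_inner_space)"
  using cinner_add_left[of x "- y" z] by (simp add: cinner_minus_left)

lemma cinner_diff_right: "cinner x (y - z) = cinner x y - cinner x (z::'a::complex_inner_space)"
proof -
  have "cinner x (y - z) = cnj (cinner (y - z) x)"
    by (rule cinner_commute)
  then show ?thesis
    by (simp add: cinner_diff_left cinner_commute[of x y] cinner_commute[of x z])
qed

lemma power2_norm_eq_cinner: "(norm x)\<^sup>2 = Re (cinner x (x::'a::complex_inner_space))"
proof -
  have "0 \<le> Re (cinner x x)"
    using norm_ge_zero[of x] unfolding norm_eq_sqrt_cinner[of x] by simp
  then show ?thesis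
    unfolding norm_eq_sqrt_cinner[of x] by simp
qed

lemma parallelogram_law:
  fixes a b :: "'a::complex_inner_space"
  shows "(norm (a + b))\<^sup>2 + (norm (a - b))\<^sup>2 = 2 * (norm a)\<^sup>2 + 2 * (norm b)\<^sup>2"
proof -
  have "cinner (a + b) (a + b) + cinner (a - b) (a - b) = 2 * cinner a a + 2 * cinner b b"
    by (simp add: cinner_add_left cinner_add_right cinner_diff_left cinner_diff_right algebra_simps)
  then have "Re (cinner (a + b) (a + b) + cinner (a - b) (a - b)) = Re (2 * cinner a a + 2 * cinner b b)"
    by simp
  then show ?thesis
    by (simp add: power2_norm_eq_cinner)
qed

lemma convex_dist_le_Inf_norm:
  fixes C :: "'a::complex_inner_space set"
  assumes "convex C" "a \<in> C" "b \<in> C"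
  shows "(norm (a - b))\<^sup>2 \<le> 2 * (norm a)\<^sup>2 + 2 * (norm b)\<^sup>2 - 4 * (Inf (norm ` C))\<^sup>2"
proof -
  have "(1/2) *\<^sub>R a + (1/2) *\<^sub>R b \<in> C"
    using assms by (intro convexD) auto
  then have "Inf (norm ` C) \<le> norm ((1/2) *\<^sub>R a + (1/2) *\<^sub>R b)"
    by (intro cInf_lower) (auto intro: bdd_belowI[of _ 0])
  also have "\<dots> = norm (a + b) / 2"
    by (simp flip: scaleR_right_distrib)
  finally have "Inf (norm ` C) \<le> norm (a + b) / 2" .
  moreover have "0 \<le> Inf (norm ` C)"
    using assms by (intro cInf_greatest) auto
  ultimately have "(2 * Inf (norm ` C))\<^sup>2 \<le> (norm (a + b))\<^sup>2"
    by (intro power_mono) auto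
  then show ?thesis
    using parallelogram_law[of a b] by (simp add: power_mult_distrib)
qed

lemma convex_min_norm_exists:
  fixes C :: "'a::complex_hilbert_space set"
  assumes "convex C" "closed C" "C \<noteq> {}"
  obtains y where "y \<in> C" "norm y = Inf (norm ` C)"
proof -
  define m where "m = Inf (norm ` C)"
  have "m \<in> closure (norm ` C)"
    unfolding m_def using assms(3) by (intro closure_contains_Inf) (auto intro: bdd_belowI[of _ 0])
  then obtain f where "\<And>n. f n \<in> norm ` C" and "f \<longlonglongrightarrow> m"
    unfolding closure_sequential by blast
  then have "\<forall>n. \<exists>y\<in>C. f n = norm y"
    by blast
  then obtain ys where "\<forall>n. ys n \<in> C \<and> f n = norm (ys n)"
    by metis
  then have ys: "\<And>n. ys n \<in> C" and "f = (\<lambda>n. norm (ys n))"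
    by auto
  with \<open>f \<longlonglongrightarrow> m\<close> have norm_ys: "(\<lambda>n. norm (ys n)) \<longlonglongrightarrow> m"
    by simp
  have "(\<lambda>n. 2 * (norm (ys n))\<^sup>2 - 2 * m\<^sup>2) \<longlonglongrightarrow> 2 * m\<^sup>2 - 2 * m\<^sup>2"
    by (intro tendsto_intros norm_ys)
  then have excess: "(\<lambda>n. 2 * (norm (ys n))\<^sup>2 - 2 * m\<^sup>2) \<longlonglongrightarrow> 0"
    by simp
  have "Cauchy ys"
  proof (rule metric_CauchyI)
    fix e :: real
    assume "e > 0"
    then have "\<forall>\<^sub>F n in sequentially. 2 * (norm (ys n))\<^sup>2 - 2 * m\<^sup>2 < e\<^sup>2 / 2"
      by (intro order_tendstoD(2)[OF excess]) simp
    then obtain N where N: "\<And>n. n \<ge> N \<Longrightarrow> 2 * (norm (ys n))\<^sup>2 - 2 * m\<^sup>2 < e\<^sup>2 / 2"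
      unfolding eventually_sequentially by blast
    show "\<exists>M. \<forall>p\<ge>M. \<forall>q\<ge>M. dist (ys p) (ys q) < e"
    proof (intro exI allI impI)
      fix p q
      assume "N \<le> p" "N \<le> q"
      then have "(norm (ys p - ys q))\<^sup>2 < e\<^sup>2"
        using convex_dist_le_Inf_norm[OF assms(1) ys ys, of p q] N[of p] N[of q]
        unfolding m_def by linarith
      then show "dist (ys p) (ys q) < e"
        using \<open>e > 0\<close> by (simp add: dist_norm power_less_imp_less_base)
    qed
  qed
  then obtain y where "ys \<longlonglongrightarrow> y"
    using Cauchy_convergent convergent_def by blast
  then have "y \<in> C" and "norm y = m"
    using closed_sequentially[OF assms(2) ys] LIMSEQ_unique[OF tendsto_norm norm_ys] by auto
  then show thesis
    using that unfolding m_def by blast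
qed

definition approx_solutions ::
  "('a::real_normed_vector \<Rightarrow> 'b::real_normed_vector) \<Rightarrow> 'b \<Rightarrow> real \<Rightarrow> 'a set" where
  "approx_solutions T x \<epsilon> = {y. norm (T y - x) \<le> \<epsilon>}"

lemma approx_solutions_mono:
  "\<epsilon> \<le> \<epsilon>' \<Longrightarrow> approx_solutions T x \<epsilon> \<subseteq> approx_solutions T x \<epsilon>'"
  unfolding approx_solutions_def by auto

lemma approx_solutions_move:
  assumes "y \<in> approx_solutions T x \<epsilon>"
  shows "y \<in> approx_solutions T x' (\<epsilon> + norm (x' - x))"
  using assms norm_triangle_ineq[of "T y - x" "x - x'"]
  unfolding approx_solutions_def by (simp add: norm_minus_commute)

lemma convex_approx_solutions:
  assumes "linear T"
  shows "convex (approx_solutions T x \<epsilon>)"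
proof -
  have "approx_solutions T x \<epsilon> = T -` cball x \<epsilon>"
    unfolding approx_solutions_def by (auto simp: dist_norm norm_minus_commute)
  then show ?thesis
    using convex_linear_vimage[OF assms convex_cball] by simp
qed

lemma closed_approx_solutions:
  assumes "bounded_linear T"
  shows "closed (approx_solutions T x \<epsilon>)"
  unfolding approx_solutions_def
  by (intro closed_Collect_le continuous_intros bounded_linear.continuous_on[OF assms])

lemma approx_solutions_nonempty:
  assumes "x \<in> closure (range T)" "\<epsilon> > 0"
  obtains w where "w \<in> approx_solutions T x \<epsilon>"
proof -
  obtain y where "y \<in> range T" "dist y x < \<epsilon>"
    using assms closure_approachable by blast
  then obtain w where "norm (T w - x) < \<epsilon>"
    by (auto simp: dist_norm)
  then show thesis
    using that[of w] by (simp add: approx_solutions_def)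
qed

lemma
  fixes T :: "'a::complex_hilbert_space \<Rightarrow> 'a"
  assumes T: "bounded_linear T" and x: "x \<in> closure (range T)" and "\<epsilon> > 0"
  shows extremal_vector_in_approx_solutions: "extremal_vector T x \<epsilon> \<in> approx_solutions T x \<epsilon>"
    and norm_extremal_vector: "norm (extremal_vector T x \<epsilon>) = Inf (norm ` approx_solutions T x \<epsilon>)"
proof -
  let ?F = "approx_solutions T x \<epsilon>"
  have F: "convex ?F" "closed ?F" "?F \<noteq> {}"
    using convex_approx_solutions[OF bounded_linear.linear[OF T]] closed_approx_solutions[OF T]
      approx_solutions_nonempty[OF x \<open>\<epsilon> > 0\<close>] by blast+
  obtain y where y: "y \<in> ?F" "norm y = Inf (norm ` ?F)"
    using convex_min_norm_exists[OF F] .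
  have Inf_eq: "Inf {norm y | y. norm (T y - x) \<le> \<epsilon>} = Inf (norm ` ?F)"
    unfolding approx_solutions_def by (rule arg_cong[where f = Inf]) auto
  have "extremal_vector T x \<epsilon> = y"
    unfolding extremal_vector_def Inf_eq
  proof (rule the_equality)
    fix z
    assume "norm (T z - x) \<le> \<epsilon> \<and> norm z = Inf (norm ` ?F)"
    then have "z \<in> ?F" "norm z = Inf (norm ` ?F)"
      unfolding approx_solutions_def by auto
    then have "(norm (z - y))\<^sup>2 \<le> 0"
      using convex_dist_le_Inf_norm[OF F(1) _ y(1)] y(2) by fastforce
    then show "z = y"
      by simp
  qed (use y in \<open>auto simp: approx_solutions_def\<close>)
  then show "extremal_vector T x \<epsilon> \<in> ?F" "norm (extremal_vector T x \<epsilon>) = Inf (norm ` ?F)"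
    using y by simp_all
qed

lemma norm_extremal_vector_le:
  fixes T :: "'a::complex_hilbert_space \<Rightarrow> 'a"
  assumes "bounded_linear T" "x \<in> closure (range T)" "\<epsilon> > 0" "z \<in> approx_solutions T x \<epsilon>"
  shows "norm (extremal_vector T x \<epsilon>) \<le> norm z"
  unfolding norm_extremal_vector[OF assms(1-3)]
  using assms(4) by (intro cInf_lower) (auto intro: bdd_belowI[of _ 0])

lemma exists_approx_solution_near:
  fixes T :: "'a::real_normed_vector \<Rightarrow> 'b::real_normed_vector"
  assumes T: "linear T" and "0 \<le> d" "0 < \<eta>"
    and u: "u \<in> approx_solutions T x (\<epsilon> + d)" and w: "w \<in> approx_solutions T x (\<epsilon> - \<eta>)"
  obtains z where "z \<in> approx_solutions T x \<epsilon>" "norm (z - u) \<le> d / \<eta> * (norm w + norm u)"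
proof
  define l where "l = d / (d + \<eta>)"
    \<comment> \<open>chosen so that the excess \<open>(1 - l) * d\<close> at \<open>u\<close> equals the slack \<open>l * \<eta>\<close> at \<open>w\<close>\<close>
  have l: "0 \<le> l" "l \<le> 1" "l \<le> d / \<eta>"
    unfolding l_def using \<open>0 \<le> d\<close> \<open>0 < \<eta>\<close> by (auto simp: frac_le)
  have "T (u + l *\<^sub>R (w - u)) - x = (1 - l) *\<^sub>R (T u - x) + l *\<^sub>R (T w - x)"
    by (simp add: linear_add[OF T] linear_diff[OF T] linear_scale[OF T] algebra_simps)
  also have "norm \<dots> \<le> (1 - l) * norm (T u - x) + l * norm (T w - x)"
    using l norm_triangle_ineq[of "(1 - l) *\<^sub>R (T u - x)" "l *\<^sub>R (T w - x)"] by simp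
  also have "\<dots> \<le> (1 - l) * (\<epsilon> + d) + l * (\<epsilon> - \<eta>)"
    using l u w unfolding approx_solutions_def by (intro add_mono mult_left_mono) auto
  also have "\<dots> = \<epsilon>"
  proof -
    have "(1 - l) * d = l * \<eta>"
      unfolding l_def using \<open>0 \<le> d\<close> \<open>0 < \<eta>\<close> by (simp add: field_simps)
    then show ?thesis
      by (simp add: algebra_simps)
  qed
  finally show "u + l *\<^sub>R (w - u) \<in> approx_solutions T x \<epsilon>"
    by (simp add: approx_solutions_def)
  have "norm (u + l *\<^sub>R (w - u) - u) = l * norm (w - u)"
    using l by simp
  also have "\<dots> \<le> d / \<eta> * (norm w + norm u)"
    using l by (intro mult_mono norm_triangle_ineq4) auto
  finally show "norm (u + l *\<^sub>R (w - u) - u) \<le> d / \<eta> * (norm w + norm u)" .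
qed

lemma norm_extremal_vector_perturbed_le:
  fixes T :: "'a::complex_hilbert_space \<Rightarrow> 'a"
  assumes T: "bounded_linear T" and dense: "closure (range T) = UNIV" and "\<epsilon> > 0"
    and w: "w \<in> approx_solutions T x (\<epsilon> / 2)" and close: "norm (x' - x) \<le> \<epsilon> / 4"
  shows "norm (extremal_vector T x' \<epsilon>)
    \<le> norm (extremal_vector T x \<epsilon>) + 4 / \<epsilon> * (norm w + norm (extremal_vector T x \<epsilon>)) * norm (x' - x)"
proof -
  let ?y = "extremal_vector T x \<epsilon>" and ?\<delta> = "norm (x' - x)"
  have y: "?y \<in> approx_solutions T x' (\<epsilon> + ?\<delta>)"
    using approx_solutions_move extremal_vector_in_approx_solutions[OF T _ \<open>\<epsilon> > 0\<close>] dense by blast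
  have w': "w \<in> approx_solutions T x' (\<epsilon> - \<epsilon> / 4)"
    using approx_solutions_move[OF w, of x'] approx_solutions_mono[of "\<epsilon> / 2 + ?\<delta>" "\<epsilon> - \<epsilon> / 4"] close
    by auto
  obtain z where z: "z \<in> approx_solutions T x' \<epsilon>"
    and z_near: "norm (z - ?y) \<le> ?\<delta> / (\<epsilon> / 4) * (norm w + norm ?y)"
    by (rule exists_approx_solution_near[OF bounded_linear.linear[OF T] norm_ge_zero _ y w'])
      (use \<open>\<epsilon> > 0\<close> in simp)
  have "norm (extremal_vector T x' \<epsilon>) \<le> norm z"
    using norm_extremal_vector_le[OF T _ \<open>\<epsilon> > 0\<close> z] dense by simp
  also have "\<dots> \<le> norm ?y + norm (z - ?y)"
    using norm_triangle_ineq2[of z ?y] by simp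
  also have "\<dots> \<le> norm ?y + ?\<delta> / (\<epsilon> / 4) * (norm w + norm ?y)"
    using z_near by simp
  also have "\<dots> = norm ?y + 4 / \<epsilon> * (norm w + norm ?y) * ?\<delta>"
    using \<open>\<epsilon> > 0\<close> by (simp add: field_simps)
  finally show ?thesis .
qed

lemma extremal_vector_dist_le:
  fixes T :: "'a::complex_hilbert_space \<Rightarrow> 'a"
  assumes T: "bounded_linear T" and dense: "closure (range T) = UNIV" and "\<epsilon> > 0"
    and w: "w \<in> approx_solutions T x (\<epsilon> / 2)" and close: "norm (x' - x) \<le> \<epsilon> / 4"
  defines "m \<equiv> norm (extremal_vector T x \<epsilon>)"
    and "K \<equiv> 4 / \<epsilon> * (norm w + norm (extremal_vector T x \<epsilon>))"
  shows "norm (extremal_vector T x' \<epsilon> - extremal_vector T x \<epsilon>)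
    \<le> K * norm (x' - x) + sqrt (8 * K * norm (x' - x) * (m + K * norm (x' - x)))"
proof -
  let ?y = "extremal_vector T x \<epsilon>" and ?y' = "extremal_vector T x' \<epsilon>" and ?\<delta> = "norm (x' - x)"
  have y: "?y \<in> approx_solutions T x \<epsilon>"
    using extremal_vector_in_approx_solutions[OF T _ \<open>\<epsilon> > 0\<close>] dense by simp
  have y': "norm ?y' \<le> m + K * ?\<delta>"
    using norm_extremal_vector_perturbed_le[OF T dense \<open>\<epsilon> > 0\<close> w close] unfolding m_def K_def by simp
  have K\<delta>: "K * ?\<delta> \<le> norm w + m"
    using mult_left_mono[OF close, of K] \<open>\<epsilon> > 0\<close> unfolding K_def m_def by simp
  have "?y' \<in> approx_solutions T x (\<epsilon> + norm (x - x'))"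
    using approx_solutions_move extremal_vector_in_approx_solutions[OF T _ \<open>\<epsilon> > 0\<close>] dense by blast
  then have y'_move: "?y' \<in> approx_solutions T x (\<epsilon> + ?\<delta>)"
    by (simp add: norm_minus_commute)
  have w': "w \<in> approx_solutions T x (\<epsilon> - \<epsilon> / 2)"
    using w by simp
  obtain z where z: "z \<in> approx_solutions T x \<epsilon>"
    and z_near: "norm (z - ?y') \<le> ?\<delta> / (\<epsilon> / 2) * (norm w + norm ?y')"
    by (rule exists_approx_solution_near[OF bounded_linear.linear[OF T] norm_ge_zero _ y'_move w'])
      (use \<open>\<epsilon> > 0\<close> in simp)
  note z_near
  also have "\<dots> \<le> ?\<delta> / (\<epsilon> / 2) * (2 * (norm w + m))"
    using y' K\<delta> \<open>\<epsilon> > 0\<close> by (intro mult_left_mono) auto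
  also have "\<dots> = K * ?\<delta>"
    unfolding K_def m_def by simp
  finally have z_y': "norm (z - ?y') \<le> K * ?\<delta>" .
  have "(norm (z - ?y))\<^sup>2 \<le> 2 * (norm z)\<^sup>2 + 2 * m\<^sup>2 - 4 * m\<^sup>2"
    using convex_dist_le_Inf_norm[OF convex_approx_solutions[OF bounded_linear.linear[OF T]] z y]
      norm_extremal_vector[OF T _ \<open>\<epsilon> > 0\<close>] dense unfolding m_def by simp
  also have "\<dots> \<le> 2 * (m + 2 * K * ?\<delta>)\<^sup>2 - 2 * m\<^sup>2"
    using y' z_y' norm_triangle_ineq2[of z ?y'] by (simp add: power_mono)
  also have "\<dots> = 8 * K * ?\<delta> * (m + K * ?\<delta>)"
    by (simp add: power2_eq_square algebra_simps)
  finally have "norm (z - ?y) \<le> sqrt (8 * K * ?\<delta> * (m + K * ?\<delta>))"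
    by (simp add: real_le_rsqrt)
  then show ?thesis
    using z_y' norm_triangle_ineq[of "?y' - z" "z - ?y"] by (simp add: norm_minus_commute)
qed

lemma continuous_extremal_vector:
  fixes T :: "'a::complex_hilbert_space \<Rightarrow> 'a"
  assumes T: "bounded_linear T" and dense: "closure (range T) = UNIV" and "\<epsilon> > 0"
  shows "continuous_on UNIV (\<lambda>x. extremal_vector T x \<epsilon>)"
proof (intro continuous_at_imp_continuous_on ballI)
  fix x :: 'a
  obtain w where w: "w \<in> approx_solutions T x (\<epsilon> / 2)"
    using approx_solutions_nonempty[of x T "\<epsilon> / 2"] dense \<open>\<epsilon> > 0\<close> by auto
  define m where "m = norm (extremal_vector T x \<epsilon>)"
  define K where "K = 4 / \<epsilon> * (norm w + m)"
  define g where "g \<delta> = K * \<delta> + sqrt (8 * K * \<delta> * (m + K * \<delta>))" for \<delta> :: real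
  have dist_lim: "((\<lambda>x'. norm (x' - x)) \<longlongrightarrow> 0) (at x)"
    by (intro tendsto_norm_zero LIM_zero tendsto_ident_at)
  have "((\<lambda>x'. g (norm (x' - x))) \<longlongrightarrow> g 0) (at x)"
    unfolding g_def by (intro tendsto_intros dist_lim)
  then have bound: "((\<lambda>x'. g (norm (x' - x))) \<longlongrightarrow> 0) (at x)"
    by (simp add: g_def)
  have "\<forall>\<^sub>F x' in at x. norm (x' - x) < \<epsilon> / 4"
    using dist_lim \<open>\<epsilon> > 0\<close> by (intro order_tendstoD(2)) auto
  then have "\<forall>\<^sub>F x' in at x.
      norm (extremal_vector T x' \<epsilon> - extremal_vector T x \<epsilon>) \<le> g (norm (x' - x))"
  proof (rule eventually_mono)
    fix x'
    assume "norm (x' - x) < \<epsilon> / 4"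
    then show "norm (extremal_vector T x' \<epsilon> - extremal_vector T x \<epsilon>) \<le> g (norm (x' - x))"
      unfolding g_def K_def m_def by (intro extremal_vector_dist_le[OF T dense \<open>\<epsilon> > 0\<close> w] less_imp_le)
  qed
  then have "((\<lambda>x'. extremal_vector T x' \<epsilon> - extremal_vector T x \<epsilon>) \<longlongrightarrow> 0) (at x)"
    using bound by (rule Lim_null_comparison)
  then show "isCont (\<lambda>x. extremal_vector T x \<epsilon>) x"
    by (simp add: isCont_def LIM_zero_iff)
qed

theorem mainTheorem8:
  fixes T :: "'a::complex_hilbert_space \<Rightarrow> 'a" and \<epsilon> :: real
  assumes "separable_space TYPE('a)"
    and "infinite_dimensional TYPE('a)"
    and "bounded_clinear T"
    and "closure (range T) = UNIV"
    and "\<epsilon> > 0"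
  shows "continuous_on {x0. norm x0 > \<epsilon>} (\<lambda>x0. extremal_vector T x0 \<epsilon>)"
proof -
  have "bounded_linear T"
    using assms(3) unfolding bounded_clinear_def by simp
  then show ?thesis
    using continuous_extremal_vector[OF _ assms(4,5)] continuous_on_subset by blast
qed

end
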